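(* Let $\mathbf c:\mathbb R/l\mathbb Z\to\mathbb R^3$ ($l>0$) be an embedded $C^\infty$ regular curve and $C:=\mathbf c(\mathbb R/l\mathbb Z)$. Unless $C$ is a circle, $C$ has at most finitely many symmetries.
   Context: A symmetry of $C$ is an isometry $T$ of $\mathbb R^3$, different from the identity, with $T(C)=C$. *)

theory Defs
  imports "HOL-Analysis.Analysis"
begin

definition curve_deriv :: "nat \<Rightarrow> (real \<Rightarrow> 'a::real_normed_vector) \<Rightarrow> real \<Rightarrow> 'a" where
  "curve_deriv n c = ((\<lambda>f t. vector_derivative f (at t)) ^^ n) c"

definition smooth_curve :: "(real \<Rightarrow> 'a::real_normed_vector) \<Rightarrow> bool" where
  "smooth_curve c \<longleftrightarrow> (\<forall>n t. curve_deriv n c differentiable (at t))"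

definition regular_curve :: "(real \<Rightarrow> 'a::real_normed_vector) \<Rightarrow> bool" where
  "regular_curve c \<longleftrightarrow> (\<forall>t. vector_derivative c (at t) \<noteq> 0)"

text \<open>A map R -> R^3 descending to an injective map on R/lZ:
  c s = c t iff s - t is an integer multiple of l.\<close>
definition embedded_closed_curve :: "real \<Rightarrow> (real \<Rightarrow> 'a) \<Rightarrow> bool" where
  "embedded_closed_curve l c \<longleftrightarrow> (\<forall>s t. c s = c t \<longleftrightarrow> (\<exists>k::int. s - t = of_int k * l))"

definition isometry :: "('a::metric_space \<Rightarrow> 'a) \<Rightarrow> bool" where
  "isometry T \<longleftrightarrow> (\<forall>x y. dist (T x) (T y) = dist x y)"

definition symmetries :: "'a::metric_space set \<Rightarrow> ('a \<Rightarrow> 'a) set" where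
  "symmetries C = {T. isometry T \<and> T \<noteq> id \<and> T ` C = C}"

definition is_circle :: "(real^3) set \<Rightarrow> bool" where
  "is_circle C \<longleftrightarrow> (\<exists>p r n. r > 0 \<and> n \<noteq> 0 \<and> C = {x. dist x p = r \<and> (x - p) \<bullet> n = 0})"

end

theory Submission
  imports Defs
begin

text \<open>Every symmetry of the compact set \<open>C\<close> fixes its Chebyshev centre \<open>p\<close>, so the symmetries act
  on \<open>C - p\<close> as distinct orthogonal matrices. If there are infinitely many, two of them \<open>A\<close>, \<open>B\<close>
  are arbitrarily close, and \<open>A\<^sup>T B\<close> is a symmetry close to the identity; by Euler's theorem it
  is a rotation by a small positive angle about some axis. Letting the angles tend to zero along
  a subsequence with converging axes, the closed set \<open>C - p\<close> becomes invariant under all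
  rotations about a fixed axis. A simple closed curve does not embed into a line, so some point
  of \<open>C\<close> lies off the axis and its orbit is a circle contained in \<open>C\<close>; finally a simple
  closed curve containing another one equals it, so \<open>C\<close> is that circle.\<close>

section \<open>Simple closed curves\<close>

lemma smooth_curve_continuous:
  assumes "smooth_curve c"
  shows "continuous_on UNIV c"
proof -
  have "c differentiable (at t)" for t
    using assms unfolding smooth_curve_def by (metis curve_deriv_def funpow_0)
  then show ?thesis
    by (simp add: continuous_at_imp_continuous_on differentiable_imp_continuous_within)
qed

lemma embedded_closed_curve_representative:
  assumes "embedded_closed_curve l c" "l > 0"
  obtains s' where "a \<le> s'" "s' < a + l" "c s' = c s"
proof
  define k where "k = \<lfloor>(s - a) / l\<rfloor>"
  have "of_int k \<le> (s - a) / l" "(s - a) / l < of_int k + 1"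
    unfolding k_def by linarith+
  then have "of_int k * l \<le> s - a" "s - a < (of_int k + 1) * l"
    using assms(2) by (simp_all add: field_simps)
  then show "a \<le> s - of_int k * l" "s - of_int k * l < a + l"
    by (simp_all add: algebra_simps)
  have "(s - of_int k * l) - s = of_int (- k) * l" by simp
  then show "c (s - of_int k * l) = c s"
    using assms(1) unfolding embedded_closed_curve_def by blast
qed

lemma embedded_closed_curve_eqD:
  assumes "embedded_closed_curve l c" "l > 0" "c s = c t" "\<bar>s - t\<bar> < l"
  shows "s = t"
proof -
  obtain k :: int where k: "s - t = of_int k * l"
    using assms(1,3) unfolding embedded_closed_curve_def by blast
  then have "\<bar>of_int k\<bar> * l < 1 * l" using assms(2,4) by (simp add: abs_mult)
  then have "k = 0" using assms(2) by (simp only: mult_less_cancel_right) linarith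
  then show ?thesis using k by simp
qed

lemma embedded_closed_curve_range:
  assumes "embedded_closed_curve l c" "l > 0"
  shows "range c = c ` {a..a+l}"
proof (intro equalityI subsetI)
  fix z assume "z \<in> range c"
  then obtain s where "z = c s" by blast
  with embedded_closed_curve_representative[OF assms] show "z \<in> c ` {a..a+l}"
    by (metis atLeastAtMost_iff image_eqI less_eq_real_def)
qed auto

lemma compact_range_embedded_closed_curve:
  assumes "embedded_closed_curve l c" "l > 0" "continuous_on UNIV c"
  shows "compact (range c)"
  unfolding embedded_closed_curve_range[OF assms(1,2), of 0]
  by (rule compact_continuous_image[OF continuous_on_subset[OF assms(3)]]) auto

lemma connected_range_embedded_closed_curve_minus_point:
  assumes "embedded_closed_curve l c" "l > 0" "continuous_on UNIV c"
  shows "connected (range c - {c t})"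
proof -
  have "range c - {c t} = c ` {t<..<t+l}"
  proof (intro equalityI subsetI)
    fix z assume z: "z \<in> range c - {c t}"
    then obtain s where "z = c s" by blast
    then obtain s' where "t \<le> s'" "s' < t + l" "c s' = z"
      using embedded_closed_curve_representative[OF assms(1,2)] by metis
    with z show "z \<in> c ` {t<..<t+l}" by (intro image_eqI[of _ c s']) (auto simp: order_le_less)
  next
    fix z assume "z \<in> c ` {t<..<t+l}"
    then obtain s where s: "t < s" "s < t + l" "z = c s" by auto
    then have "c s \<noteq> c t" using embedded_closed_curve_eqD[OF assms(1,2), of s t] by auto
    then show "z \<in> range c - {c t}" using s by auto
  qed
  moreover have "connected (c ` {t<..<t+l})"
    by (rule connected_continuous_image[OF continuous_on_subset[OF assms(3)]]) auto
  ultimately show ?thesis by simp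
qed

text \<open>A space without cut points does not embed into the real line: the preimage of a value
  strictly between two values of the embedding would be a cut point.\<close>

lemma no_continuous_injection_to_real:
  fixes S :: "'a::topological_space set" and P :: "'a \<Rightarrow> real"
  assumes "connected S" and no_cut_point: "\<And>y. y \<in> S \<Longrightarrow> connected (S - {y})"
    and "a \<in> S" "b \<in> S" "a \<noteq> b"
    and cont: "continuous_on S P" and inj: "inj_on P S"
  shows False
proof -
  have "P a \<noteq> P b" using inj assms(3-5) by (meson inj_onD)
  then obtain a' b' where ab': "a' \<in> S" "b' \<in> S" "P a' < P b'"
    using assms(3,4) by (metis linorder_neqE_linordered_idom)
  define m where "m = (P a' + P b') / 2"
  have m: "m \<in> {P a'<..<P b'}" using ab'(3) by (simp add: m_def)
  have "connected (P ` S)" by (rule connected_continuous_image[OF cont \<open>connected S\<close>])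
  then have "m \<in> P ` S" using connected_contains_Ioo[of "P ` S"] ab' m by blast
  then obtain y where y: "y \<in> S" "P y = m" by blast
  have "connected (P ` (S - {y}))"
    by (rule connected_continuous_image[OF continuous_on_subset[OF cont] no_cut_point[OF y(1)]]) auto
  moreover have "P a' \<in> P ` (S - {y})" "P b' \<in> P ` (S - {y})" using y ab' m by auto
  ultimately have "m \<in> P ` (S - {y})" using connected_contains_Ioo m by blast
  then show False using inj y by (auto dest: inj_onD)
qed

lemma embedded_closed_curve_no_injection_to_real:
  fixes c :: "real \<Rightarrow> 'a::topological_space" and P :: "'a \<Rightarrow> real"
  assumes "embedded_closed_curve l c" "l > 0" "continuous_on UNIV c"
    and "continuous_on (range c) P" "inj_on P (range c)"
  shows False
proof (rule no_continuous_injection_to_real)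
  show "connected (range c)" by (rule connected_continuous_image[OF assms(3)]) simp
  show "connected (range c - {y})" if "y \<in> range c" for y
    using that connected_range_embedded_closed_curve_minus_point[OF assms(1-3)] by blast
  show "c 0 \<noteq> c (l/2)" using embedded_closed_curve_eqD[OF assms(1,2), of 0 "l/2"] assms(2) by auto
qed (use assms in auto)

lemma embedded_closed_curve_periodic:
  assumes "embedded_closed_curve l c"
  shows "c (t + l) = c t"
proof -
  have "(t + l) - t = of_int 1 * l" by simp
  with assms show ?thesis unfolding embedded_closed_curve_def by blast
qed

text \<open>A closed set missing \<open>c t\<^sub>0\<close> lies in the arc \<open>c ` {t\<^sub>0<..<t\<^sub>0+l}\<close>, and the inverse of \<open>c\<close>
  on its compact preimage is continuous.\<close>

lemma embedded_closed_curve_closed_subset_embeds_real: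
  fixes c :: "real \<Rightarrow> 'a::t2_space"
  assumes c: "embedded_closed_curve l c" "l > 0" "continuous_on UNIV c"
    and F: "closed F" "F \<subseteq> range c" "c t0 \<notin> F"
  obtains P :: "'a \<Rightarrow> real" where "continuous_on F P" "inj_on P F"
proof
  define K where "K = {t0..t0+l} \<inter> c -` F"
  have "closed (c -` F)"
    using c(3) F(1) continuous_closed_vimage continuous_on_eq_continuous_at by blast
  then have "compact K" unfolding K_def by (intro compact_Int_closed) auto
  have K_inner: "t0 < t \<and> t < t0 + l" if "t \<in> K" for t
  proof -
    have "c t \<in> F" "t0 \<le> t" "t \<le> t0 + l" using that by (auto simp: K_def)
    moreover from this(1) have "t \<noteq> t0" "t \<noteq> t0 + l"
      using F(3) embedded_closed_curve_periodic[OF c(1), of t0] by metis+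
    ultimately show ?thesis by auto
  qed
  have "inj_on c K"
  proof (rule inj_onI)
    fix s t assume "s \<in> K" "t \<in> K" "c s = c t"
    then show "s = t"
      using embedded_closed_curve_eqD[OF c(1,2), of s t] K_inner[of s] K_inner[of t] by auto
  qed
  have "c ` K = F"
  proof (intro equalityI subsetI)
    fix z assume z: "z \<in> F"
    then obtain s where "z = c s" using F(2) by blast
    then obtain s' where "t0 \<le> s'" "s' < t0 + l" "c s' = z"
      using embedded_closed_curve_representative[OF c(1,2)] by metis
    with z show "z \<in> c ` K" by (intro image_eqI[of _ c s']) (auto simp: K_def)
  qed (auto simp: K_def)
  have "continuous_on (c ` K) (inv_into K c)"
    by (rule continuous_on_inv[OF continuous_on_subset[OF c(3)] \<open>compact K\<close>])
      (auto simp: inv_into_f_f[OF \<open>inj_on c K\<close>])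
  then show "continuous_on F (inv_into K c)" by (simp add: \<open>c ` K = F\<close>)
  have "inj_on (inv_into K c) (c ` K)" by (rule inj_on_inv_into) simp
  then show "inj_on (inv_into K c) F" by (simp add: \<open>c ` K = F\<close>)
qed

lemma embedded_closed_curve_range_subset_eq:
  fixes c g :: "real \<Rightarrow> 'a::t2_space"
  assumes c: "embedded_closed_curve l c" "l > 0" "continuous_on UNIV c"
    and g: "embedded_closed_curve L g" "L > 0" "continuous_on UNIV g"
    and sub: "range g \<subseteq> range c"
  shows "range g = range c"
proof (rule ccontr)
  assume "range g \<noteq> range c"
  then obtain t0 where "c t0 \<notin> range g" using sub by blast
  moreover have "closed (range g)"
    using compact_range_embedded_closed_curve[OF g] by (rule compact_imp_closed)
  ultimately obtain P :: "'a \<Rightarrow> real" where "continuous_on (range g) P" "inj_on P (range g)"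
    using embedded_closed_curve_closed_subset_embeds_real[OF c _ sub] by blast
  then show False by (rule embedded_closed_curve_no_injection_to_real[OF g])
qed

lemma embedded_closed_curve_not_on_line:
  fixes c :: "real \<Rightarrow> 'a::real_inner"
  assumes "embedded_closed_curve l c" "l > 0" "continuous_on UNIV c"
  obtains y where "y \<in> range c" "y - p \<noteq> ((y - p) \<bullet> u) *\<^sub>R u"
proof -
  have "\<exists>y\<in>range c. y - p \<noteq> ((y - p) \<bullet> u) *\<^sub>R u"
  proof (rule ccontr)
    assume "\<not> ?thesis"
    then have on_line: "y - p = ((y - p) \<bullet> u) *\<^sub>R u" if "y \<in> range c" for y
      using that by blast
    have "inj_on (\<lambda>y. (y - p) \<bullet> u) (range c)"
    proof (rule inj_onI)
      fix y1 y2 assume "y1 \<in> range c" "y2 \<in> range c" "(y1 - p) \<bullet> u = (y2 - p) \<bullet> u"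
      then have "y1 - p = y2 - p" using on_line by metis
      then show "y1 = y2" by simp
    qed
    moreover have "continuous_on (range c) (\<lambda>y. (y - p) \<bullet> u)" by (intro continuous_intros)
    ultimately show False using embedded_closed_curve_no_injection_to_real[OF assms] by blast
  qed
  with that show ?thesis by blast
qed

section \<open>Rotations about an axis\<close>

definition orthonormal_frame :: "real^3 \<Rightarrow> real^3 \<Rightarrow> real^3 \<Rightarrow> bool" where
  "orthonormal_frame u v w \<longleftrightarrow>
     u \<bullet> u = 1 \<and> v \<bullet> v = 1 \<and> w \<bullet> w = 1 \<and> u \<bullet> v = 0 \<and> u \<bullet> w = 0 \<and> v \<bullet> w = 0"

definition axis_rotation :: "real^3 \<Rightarrow> real^3 \<Rightarrow> real^3 \<Rightarrow> real \<Rightarrow> real^3 \<Rightarrow> real^3" where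
  "axis_rotation u v w t x = (x \<bullet> u) *\<^sub>R u + (cos t * (x \<bullet> v) - sin t * (x \<bullet> w)) *\<^sub>R v
      + (sin t * (x \<bullet> v) + cos t * (x \<bullet> w)) *\<^sub>R w"

lemma orthonormal_frame_inner:
  assumes "orthonormal_frame u v w"
  shows "u \<bullet> u = 1" "v \<bullet> v = 1" "w \<bullet> w = 1" "u \<bullet> v = 0" "u \<bullet> w = 0" "v \<bullet> w = 0"
    "v \<bullet> u = 0" "w \<bullet> u = 0" "w \<bullet> v = 0"
  using assms by (auto simp: orthonormal_frame_def inner_commute)

lemma orthonormal_frame_expand:
  assumes "orthonormal_frame u v w"
  shows "x = (x \<bullet> u) *\<^sub>R u + (x \<bullet> v) *\<^sub>R v + (x \<bullet> w) *\<^sub>R w"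
proof (rule ccontr)
  define z where "z = x - ((x \<bullet> u) *\<^sub>R u + (x \<bullet> v) *\<^sub>R v + (x \<bullet> w) *\<^sub>R w)"
  assume "x \<noteq> (x \<bullet> u) *\<^sub>R u + (x \<bullet> v) *\<^sub>R v + (x \<bullet> w) *\<^sub>R w"
  then have "z \<noteq> 0" by (simp add: z_def)
  note uvw = orthonormal_frame_inner[OF assms]
  have z_perp: "z \<bullet> u = 0" "z \<bullet> v = 0" "z \<bullet> w = 0"
    using uvw by (simp_all add: z_def inner_diff_left inner_add_left)
  have "pairwise orthogonal {u, v, w, z}"
    using uvw z_perp by (auto simp: pairwise_def orthogonal_def inner_commute)
  moreover have "0 \<notin> {u, v, w, z}" using uvw \<open>z \<noteq> 0\<close> by auto
  ultimately have "independent {u, v, w, z}"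
    by (rule pairwise_orthogonal_independent)
  then have "card {u, v, w, z} \<le> DIM(real^3)"
    using independent_bound by blast
  moreover have "u \<noteq> v" "u \<noteq> w" "v \<noteq> w" "z \<noteq> u" "z \<noteq> v" "z \<noteq> w"
    using uvw z_perp by auto
  then have "card {u, v, w, z} = 4" by auto
  ultimately show False by simp
qed

lemma orthonormal_frame_expand_perp:
  assumes "orthonormal_frame u v w" "y \<bullet> u = 0"
  shows "y = (y \<bullet> v) *\<^sub>R v + (y \<bullet> w) *\<^sub>R w"
  using orthonormal_frame_expand[OF assms(1), of y] assms(2) by simp

lemma orthonormal_frame_norm_plane:
  assumes "orthonormal_frame u v w"
  shows "norm (a *\<^sub>R v + b *\<^sub>R w) = sqrt (a\<^sup>2 + b\<^sup>2)"
  using orthonormal_frame_inner[OF assms]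
  by (simp add: norm_eq_sqrt_inner inner_add_left inner_add_right power2_eq_square)

lemma orthonormal_frame_exists:
  fixes u :: "real^3"
  assumes "norm u = 1"
  obtains v where "orthonormal_frame u v (cross3 u v)"
proof -
  have "\<exists>e. cross3 u e \<noteq> 0"
  proof (rule ccontr)
    assume "\<not> ?thesis"
    then have "cross3 u (axis 1 1) = 0" "cross3 u (axis 2 1) = 0" by auto
    then have "u = 0" by (simp add: cross3_simps axis_def forall_3)
    with assms show False by simp
  qed
  then obtain e where e: "cross3 u e \<noteq> 0" by blast
  define v where "v = (1 / norm (cross3 u e)) *\<^sub>R (cross3 u e)"
  have "norm v = 1" "u \<bullet> v = 0" using e by (simp_all add: v_def dot_cross_self)
  moreover have "(norm (cross3 u v))\<^sup>2 = 1"
    using assms calculation by (simp add: norm_cross)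
  then have "norm (cross3 u v) = 1"
    using norm_ge_zero[of "cross3 u v"] by (simp add: power2_eq_1_iff)
  ultimately have "orthonormal_frame u v (cross3 u v)"
    using assms by (simp add: orthonormal_frame_def dot_cross_self norm_eq_1)
  then show ?thesis by (rule that)
qed

lemma compact_orthonormal_frames: "compact {(u, v, w). orthonormal_frame u v w}"
  unfolding compact_eq_bounded_closed
proof
  have "{(u, v, w). orthonormal_frame u v w} \<subseteq> cball 0 1 \<times> cball 0 1 \<times> cball 0 1"
    by (auto simp: orthonormal_frame_def norm_eq_1[symmetric] dist_norm)
  then show "bounded {(u, v, w). orthonormal_frame u v w}"
    by (rule bounded_subset[rotated]) (intro bounded_Times bounded_cball)
  show "closed {(u, v, w). orthonormal_frame u v w}"
    unfolding orthonormal_frame_def case_prod_beta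
    by (intro closed_Collect_conj closed_Collect_eq continuous_intros)
qed

lemma axis_rotation_inner:
  assumes "orthonormal_frame u v w"
  shows "axis_rotation u v w t x \<bullet> u = x \<bullet> u"
    "axis_rotation u v w t x \<bullet> v = cos t * (x \<bullet> v) - sin t * (x \<bullet> w)"
    "axis_rotation u v w t x \<bullet> w = sin t * (x \<bullet> v) + cos t * (x \<bullet> w)"
  using orthonormal_frame_inner[OF assms]
  by (auto simp: axis_rotation_def inner_add_left inner_diff_left)

lemma axis_rotation_zero:
  assumes "orthonormal_frame u v w"
  shows "axis_rotation u v w 0 x = x"
  using orthonormal_frame_expand[OF assms, of x] by (simp add: axis_rotation_def)

lemma axis_rotation_add:
  assumes "orthonormal_frame u v w"
  shows "axis_rotation u v w s (axis_rotation u v w t x) = axis_rotation u v w (s + t) x"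
  by (simp add: axis_rotation_def[of u v w s] axis_rotation_inner[OF assms])
    (simp add: axis_rotation_def cos_add sin_add algebra_simps)

lemma axis_rotation_funpow:
  assumes "orthonormal_frame u v w"
  shows "(axis_rotation u v w t ^^ k) x = axis_rotation u v w (real k * t) x"
  by (induction k) (simp_all add: axis_rotation_zero[OF assms] axis_rotation_add[OF assms] algebra_simps)

lemma axis_rotation_periodic: "axis_rotation u v w (t + 2 * pi * of_int k) = axis_rotation u v w t"
  by (simp add: fun_eq_iff axis_rotation_def sin_add cos_add)

lemma tendsto_axis_rotation:
  assumes "(u \<longlongrightarrow> u0) F" "(v \<longlongrightarrow> v0) F" "(w \<longlongrightarrow> w0) F" "(t \<longlongrightarrow> t0) F"
  shows "((\<lambda>n. axis_rotation (u n) (v n) (w n) (t n) x) \<longlongrightarrow> axis_rotation u0 v0 w0 t0 x) F"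
  unfolding axis_rotation_def
  by (intro tendsto_intros assms isCont_tendsto_compose[OF isCont_sin assms(4)]
      isCont_tendsto_compose[OF isCont_cos assms(4)])

lemma axis_rotation_eq_iff:
  assumes "orthonormal_frame u v w" and off_axis: "(x \<bullet> v)\<^sup>2 + (x \<bullet> w)\<^sup>2 > 0"
  shows "axis_rotation u v w s x = axis_rotation u v w t x \<longleftrightarrow> sin s = sin t \<and> cos s = cos t"
proof
  define a b where "a = x \<bullet> v" and "b = x \<bullet> w"
  assume eq: "axis_rotation u v w s x = axis_rotation u v w t x"
  have E1: "a * (cos s - cos t) - b * (sin s - sin t) = 0"
    using arg_cong[where f="\<lambda>z. z \<bullet> v", OF eq]
    by (simp add: axis_rotation_inner[OF assms(1)] a_def b_def algebra_simps)
  have E2: "a * (sin s - sin t) + b * (cos s - cos t) = 0"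
    using arg_cong[where f="\<lambda>z. z \<bullet> w", OF eq]
    by (simp add: axis_rotation_inner[OF assms(1)] a_def b_def algebra_simps)
  have "(a\<^sup>2 + b\<^sup>2) * (cos s - cos t)
      = a * (a * (cos s - cos t) - b * (sin s - sin t)) + b * (a * (sin s - sin t) + b * (cos s - cos t))"
    by (simp add: power2_eq_square algebra_simps)
  also have "\<dots> = 0" by (simp add: E1 E2)
  finally have "cos s = cos t" using off_axis by (auto simp: a_def b_def)
  have "(a\<^sup>2 + b\<^sup>2) * (sin s - sin t)
      = a * (a * (sin s - sin t) + b * (cos s - cos t)) - b * (a * (cos s - cos t) - b * (sin s - sin t))"
    by (simp add: power2_eq_square algebra_simps)
  also have "\<dots> = 0" by (simp add: E1 E2)
  finally have "sin s = sin t" using off_axis by (auto simp: a_def b_def)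
  with \<open>cos s = cos t\<close> show "sin s = sin t \<and> cos s = cos t" by blast
qed (simp add: axis_rotation_def)

lemma embedded_closed_curve_axis_orbit:
  assumes "orthonormal_frame u v w" "(x \<bullet> v)\<^sup>2 + (x \<bullet> w)\<^sup>2 > 0"
  shows "embedded_closed_curve (2 * pi) (\<lambda>\<phi>. p + axis_rotation u v w \<phi> x)"
  unfolding embedded_closed_curve_def
  by (simp add: axis_rotation_eq_iff[OF assms] sin_cos_eq_iff algebra_simps)

lemma planar_rotation_exists:
  fixes a b a' b' :: real
  assumes same_norm: "a\<^sup>2 + b\<^sup>2 = a'\<^sup>2 + b'\<^sup>2" and nonzero: "a\<^sup>2 + b\<^sup>2 > 0"
  obtains \<phi> where "cos \<phi> * a - sin \<phi> * b = a'" "sin \<phi> * a + cos \<phi> * b = b'"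
proof -
  define \<rho> where "\<rho> = sqrt (a\<^sup>2 + b\<^sup>2)"
  have "\<rho> > 0" using nonzero by (simp add: \<rho>_def)
  have "\<rho>\<^sup>2 = a\<^sup>2 + b\<^sup>2" using nonzero by (simp add: \<rho>_def)
  then have "(a / \<rho>)\<^sup>2 + (b / \<rho>)\<^sup>2 = 1" "(a' / \<rho>)\<^sup>2 + (b' / \<rho>)\<^sup>2 = 1"
    using nonzero same_norm by (auto simp: power_divide add_divide_distrib[symmetric])
  then obtain \<alpha> \<beta> where "a / \<rho> = cos \<alpha>" "b / \<rho> = sin \<alpha>" "a' / \<rho> = cos \<beta>" "b' / \<rho> = sin \<beta>"
    using sincos_total_2pi by metis
  then have polar: "a = \<rho> * cos \<alpha>" "b = \<rho> * sin \<alpha>" "a' = \<rho> * cos \<beta>" "b' = \<rho> * sin \<beta>"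
    using \<open>\<rho> > 0\<close> by (simp_all add: field_simps)
  show ?thesis
  proof (rule that[of "\<beta> - \<alpha>"])
    show "cos (\<beta> - \<alpha>) * a - sin (\<beta> - \<alpha>) * b = a'" "sin (\<beta> - \<alpha>) * a + cos (\<beta> - \<alpha>) * b = b'"
      unfolding polar cos_diff sin_diff using sin_cos_squared_add[of \<alpha>] by algebra+
  qed
qed

lemma is_circle_axis_orbit:
  assumes frame: "orthonormal_frame u v w" and off_axis: "(x \<bullet> v)\<^sup>2 + (x \<bullet> w)\<^sup>2 > 0"
  shows "is_circle (range (\<lambda>\<phi>. p + axis_rotation u v w \<phi> x))"
proof -
  define a b q where "a = x \<bullet> v" and "b = x \<bullet> w" and "q = p + (x \<bullet> u) *\<^sub>R u"
  note uvw = orthonormal_frame_inner[OF frame]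
  have orbit: "p + axis_rotation u v w \<phi> x - q
      = (cos \<phi> * a - sin \<phi> * b) *\<^sub>R v + (sin \<phi> * a + cos \<phi> * b) *\<^sub>R w" for \<phi>
    by (simp add: axis_rotation_def a_def b_def q_def algebra_simps)
  have "range (\<lambda>\<phi>. p + axis_rotation u v w \<phi> x)
      = {z. dist z q = sqrt (a\<^sup>2 + b\<^sup>2) \<and> (z - q) \<bullet> u = 0}" (is "_ = ?circle")
  proof (intro equalityI subsetI)
    fix z assume "z \<in> range (\<lambda>\<phi>. p + axis_rotation u v w \<phi> x)"
    then obtain \<phi> where z: "z = p + axis_rotation u v w \<phi> x" by blast
    have "(cos \<phi> * a - sin \<phi> * b)\<^sup>2 + (sin \<phi> * a + cos \<phi> * b)\<^sup>2 = a\<^sup>2 + b\<^sup>2"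
      using sin_cos_squared_add[of \<phi>] by algebra
    then show "z \<in> ?circle"
      using uvw by (simp add: z dist_norm orbit orthonormal_frame_norm_plane[OF frame] inner_add_left)
  next
    fix z assume "z \<in> ?circle"
    then have dist_z: "norm (z - q) = sqrt (a\<^sup>2 + b\<^sup>2)" and perp: "(z - q) \<bullet> u = 0"
      by (auto simp: dist_norm)
    note z_expand = orthonormal_frame_expand_perp[OF frame perp]
    have "a\<^sup>2 + b\<^sup>2 = ((z - q) \<bullet> v)\<^sup>2 + ((z - q) \<bullet> w)\<^sup>2"
      using dist_z by (subst (asm) z_expand) (simp add: orthonormal_frame_norm_plane[OF frame])
    then obtain \<phi> where "cos \<phi> * a - sin \<phi> * b = (z - q) \<bullet> v" "sin \<phi> * a + cos \<phi> * b = (z - q) \<bullet> w"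
      using off_axis planar_rotation_exists unfolding a_def b_def by metis
    then have "p + axis_rotation u v w \<phi> x - q = z - q"
      using z_expand by (simp add: orbit)
    then show "z \<in> range (\<lambda>\<phi>. p + axis_rotation u v w \<phi> x)" by (simp add: image_iff exI[of _ \<phi>])
  qed
  moreover have "sqrt (a\<^sup>2 + b\<^sup>2) > 0" "u \<noteq> 0"
    using off_axis uvw by (auto simp: a_def b_def)
  ultimately show ?thesis unfolding is_circle_def by blast
qed

section \<open>Orthogonal matrices\<close>

lemma orthogonal_matrix_inner:
  fixes R :: "real^'n^'n"
  assumes "orthogonal_matrix R"
  shows "(R *v x) \<bullet> (R *v y) = x \<bullet> y"
  using assms orthogonal_transformation_matrix[of "(*v) R"]
  by (simp add: orthogonal_transformation_def)

lemma orthogonal_matrix_norm: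
  fixes R :: "real^'n^'n"
  assumes "orthogonal_matrix R"
  shows "norm (R *v x) = norm x"
  using orthogonal_matrix_inner[OF assms, of x x] by (simp add: norm_eq_sqrt_inner)

lemma norm_matrix_vector_mult_le:
  fixes A :: "real^'n^'m"
  shows "norm (A *v x) \<le> norm A * norm x"
proof -
  have "norm (A *v x) = L2_set (\<lambda>i. \<bar>A $ i \<bullet> x\<bar>) UNIV"
    by (simp add: norm_vec_def matrix_vector_mult_def inner_vec_def)
  also have "\<dots> \<le> L2_set (\<lambda>i. norm (A $ i) * norm x) UNIV"
    by (rule L2_set_mono) (simp_all add: Cauchy_Schwarz_ineq2)
  also have "\<dots> = norm A * norm x"
    by (simp add: norm_vec_def L2_set_left_distrib)
  finally show ?thesis .
qed

lemma bounded_orthogonal_matrices: "bounded {A :: real^'n^'n. orthogonal_matrix A}"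
proof -
  have "norm A = sqrt CARD('n)" if "orthogonal_matrix A" for A :: "real^'n^'n"
  proof -
    have "norm (A $ i) = 1" for i
      using that unfolding orthogonal_matrix_orthonormal_rows by (simp add: row_def)
    then show ?thesis by (simp add: norm_vec_def L2_set_constant)
  qed
  then show ?thesis unfolding bounded_iff by (metis mem_Collect_eq order_refl)
qed

lemma orthogonal_matrix_transpose_image:
  fixes A :: "real^'n^'n"
  assumes "orthogonal_matrix A" "(*v) A ` S = S"
  shows "(*v) (transpose A) ` S = S"
proof -
  have "transpose A *v (A *v z) = z" for z
    using assms(1) by (simp add: matrix_vector_mul_assoc orthogonal_matrix_def)
  then have "(*v) (transpose A) ` ((*v) A ` S) = S" by (simp add: image_comp)
  with assms(2) show ?thesis by simp
qed

text \<open>Two distinct elements \<open>A\<close>, \<open>B\<close> near an accumulation point of an infinite set of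
  symmetries give the nontrivial symmetry \<open>A\<^sup>T B\<close> close to the identity.\<close>

lemma infinite_orthogonal_symmetries_near_identity:
  fixes S :: "(real^'n) set"
  assumes "infinite G" and G: "\<And>A. A \<in> G \<Longrightarrow> orthogonal_matrix A \<and> (*v) A ` S = S"
    and "\<delta> > 0"
  obtains R where "orthogonal_matrix R" "(*v) R ` S = S" "R \<noteq> mat 1"
    "\<And>x. norm (R *v x - x) \<le> \<delta> * norm x"
proof -
  have "bounded G" using G bounded_orthogonal_matrices by (blast intro: bounded_subset)
  then obtain X where X: "X islimpt G" using bounded_infinite_imp_islimpt \<open>infinite G\<close> by blast
  obtain A where A: "A \<in> G" "A \<noteq> X" "dist A X < \<delta> / 2"
    using X \<open>\<delta> > 0\<close> unfolding islimpt_approachable by (meson half_gt_zero)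
  obtain B where B: "B \<in> G" "B \<noteq> X" "dist B X < min (\<delta> / 2) (dist A X)"
    using X \<open>\<delta> > 0\<close> A(2) unfolding islimpt_approachable by (meson half_gt_zero min_less_iff_conj zero_less_dist_iff)
  have "A \<noteq> B" using B by auto
  have "norm (B - A) < \<delta>"
    using A B dist_triangle[of B A X] by (simp add: dist_norm norm_minus_commute)
  have oA: "orthogonal_matrix A" "(*v) A ` S = S" and oB: "orthogonal_matrix B" "(*v) B ` S = S"
    using A(1) B(1) G by auto
  define R where "R = transpose A ** B"
  have Rx: "R *v x = transpose A *v (B *v x)" for x by (simp add: R_def matrix_vector_mul_assoc)
  show ?thesis
  proof (rule that)
    show "orthogonal_matrix R" unfolding R_def using oA oB by (simp add: orthogonal_matrix_mul)
    have "(*v) R ` S = (*v) (transpose A) ` ((*v) B ` S)" by (simp add: Rx image_image)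
    then show "(*v) R ` S = S" using oB(2) orthogonal_matrix_transpose_image[OF oA] by simp
    show "R \<noteq> mat 1"
    proof
      assume "R = mat 1"
      then have "A ** R = A" by simp
      moreover have "A ** R = B" unfolding R_def using oA(1)
        by (metis matrix_mul_assoc matrix_mul_lid orthogonal_matrix_def)
      ultimately show False using \<open>A \<noteq> B\<close> by simp
    qed
    fix x
    have "R *v x - x = transpose A *v ((B - A) *v x)"
      using oA(1) by (simp add: Rx matrix_vector_mult_diff_distrib matrix_vector_mult_diff_rdistrib
          matrix_vector_mul_assoc orthogonal_matrix_def)
    then have "norm (R *v x - x) = norm ((B - A) *v x)"
      by (metis orthogonal_matrix_norm orthogonal_matrix_transpose oA(1))
    also have "\<dots> \<le> norm (B - A) * norm x" by (rule norm_matrix_vector_mult_le)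
    also have "\<dots> \<le> \<delta> * norm x" using \<open>norm (B - A) < \<delta>\<close> by (simp add: mult_right_mono)
    finally show "norm (R *v x - x) \<le> \<delta> * norm x" .
  qed
qed

lemma det_scaleR_3: "det (k *\<^sub>R A) = k ^ 3 * det (A :: real^3^3)"
  by (simp add: det_3 power3_eq_cube algebra_simps)

lemma orthogonal_matrix_eigenvector_det:
  fixes R :: "real^3^3"
  assumes orth: "orthogonal_matrix R"
  obtains x where "x \<noteq> 0" "R *v x = det R *\<^sub>R x"
proof -
  define d where "d = det R"
  have d2: "d * d = 1" using det_orthogonal_matrix[OF orth] by (auto simp: d_def)
  define M where "M = R - d *\<^sub>R mat 1"
  have RRt: "R ** transpose R = mat 1" using orth by (simp add: orthogonal_matrix_def)
  have "transpose M = transpose R - d *\<^sub>R mat 1"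
    by (simp add: M_def vec_eq_iff transpose_def mat_def)
  then have "R ** transpose M = R ** transpose R - R ** (d *\<^sub>R mat 1)"
    by (vector matrix_matrix_mult_def sum_subtractf[symmetric] field_simps)
  also have "\<dots> = mat 1 - d *\<^sub>R R" by (simp add: RRt matrix_scalar_ac)
  finally have RtM: "R ** transpose M = mat 1 - d *\<^sub>R R" .
  have "M = - d *\<^sub>R (R ** transpose M)"
    unfolding RtM by (simp add: M_def d2 algebra_simps)
  then have "det M = (- d) ^ 3 * d * det M"
    by (metis d_def det_scaleR_3 det_mul det_transpose mult.assoc)
  then have "det M = 0" using d2 by (simp add: power3_eq_cube algebra_simps)
  then have "\<not> invertible M" by (simp add: invertible_det_nz)
  then obtain x where "x \<noteq> 0" "M *v x = 0"
    using invertible_left_inverse matrix_left_invertible_ker by blast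
  then show ?thesis
    by (intro that[of x]) (simp_all add: M_def d_def matrix_vector_mult_diff_rdistrib scaleR_matrix_vector_assoc[symmetric])
qed

lemma matrix_vector_mult_frame:
  fixes R :: "real^3^3"
  assumes "orthonormal_frame u v w"
  shows "R *v x = (x \<bullet> u) *\<^sub>R (R *v u) + (x \<bullet> v) *\<^sub>R (R *v v) + (x \<bullet> w) *\<^sub>R (R *v w)"
  by (subst orthonormal_frame_expand[OF assms, of x])
    (simp add: matrix_vector_right_distrib matrix_vector_mult_scaleR)

lemma matrix_eq_axis_rotation:
  fixes R :: "real^3^3"
  assumes "orthonormal_frame u v w" "R *v u = u"
    "R *v v = cos t *\<^sub>R v + sin t *\<^sub>R w" "R *v w = cos t *\<^sub>R w - sin t *\<^sub>R v"
  shows "R *v x = axis_rotation u v w t x"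
  by (subst matrix_vector_mult_frame[OF assms(1)]) (simp add: assms(2-4) axis_rotation_def algebra_simps)

lemma rotation_matrix_fixing_axis:
  fixes R :: "real^3^3"
  assumes "rotation_matrix R" "orthonormal_frame u v (cross3 u v)" and Ru: "R *v u = u"
  obtains c s where "c\<^sup>2 + s\<^sup>2 = 1" "R *v v = c *\<^sub>R v + s *\<^sub>R cross3 u v"
    "R *v cross3 u v = c *\<^sub>R cross3 u v - s *\<^sub>R v"
proof -
  have orth: "orthogonal_matrix R" using assms(1) by (simp add: rotation_matrix_def)
  define w where "w = cross3 u v"
  note frame = assms(2)[folded w_def]
  note uvw = orthonormal_frame_inner[OF frame]
  define c s where "c = (R *v v) \<bullet> v" and "s = (R *v v) \<bullet> w"
  have "(R *v v) \<bullet> u = 0" using orthogonal_matrix_inner[OF orth, of v u] Ru uvw by simp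
  then have Rv: "R *v v = c *\<^sub>R v + s *\<^sub>R w"
    using orthonormal_frame_expand_perp[OF frame] by (simp add: c_def s_def)
  have "c\<^sup>2 + s\<^sup>2 = 1"
    using orthogonal_matrix_inner[OF orth, of v v] uvw unfolding Rv
    by (simp add: inner_add_left inner_add_right power2_eq_square)
  have "R *v w = cross3 (R *v u) (R *v v)"
    by (simp add: w_def cross_rotation_matrix[OF assms(1)])
  also have "\<dots> = c *\<^sub>R w + s *\<^sub>R cross3 u (cross3 u v)"
    by (simp add: Ru Rv cross_add_right cross_mult_right w_def)
  also have "\<dots> = c *\<^sub>R w - s *\<^sub>R v"
    using uvw by (simp add: Lagrange)
  finally show ?thesis using that \<open>c\<^sup>2 + s\<^sup>2 = 1\<close> Rv by (simp add: w_def)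
qed

lemma rotation_matrix_axis_rotation:
  fixes R :: "real^3^3"
  assumes "rotation_matrix R"
  obtains u v w t where "orthonormal_frame u v w" "0 \<le> t" "t \<le> pi"
    "\<And>x. R *v x = axis_rotation u v w t x"
proof -
  have orth: "orthogonal_matrix R" and "det R = 1" using assms by (simp_all add: rotation_matrix_def)
  obtain x where "x \<noteq> 0" "R *v x = det R *\<^sub>R x" by (rule orthogonal_matrix_eigenvector_det[OF orth])
  then have "R *v x = x" using \<open>det R = 1\<close> by simp
  define u where "u = (1 / norm x) *\<^sub>R x"
  have "norm u = 1" and Ru: "R *v u = u"
    using \<open>x \<noteq> 0\<close> \<open>R *v x = x\<close> by (simp_all add: u_def matrix_vector_mult_scaleR)
  obtain v where frame: "orthonormal_frame u v (cross3 u v)"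
    using \<open>norm u = 1\<close> by (rule orthonormal_frame_exists)
  obtain c s where "c\<^sup>2 + s\<^sup>2 = 1" and Rv: "R *v v = c *\<^sub>R v + s *\<^sub>R cross3 u v"
    and Rw: "R *v cross3 u v = c *\<^sub>R cross3 u v - s *\<^sub>R v"
    by (rule rotation_matrix_fixing_axis[OF assms frame Ru])
  then have "1 - c\<^sup>2 = s\<^sup>2" "c\<^sup>2 \<le> 1" by simp_all (use zero_le_power2[of s] in linarith)
  then have c_bounds: "-1 \<le> c" "c \<le> 1" "sqrt (1 - c\<^sup>2) = \<bar>s\<bar>"
    using abs_square_le_1[of c] by (simp_all add: abs_le_iff real_sqrt_abs)
  define t where "t = arccos c"
  have t: "cos t = c" "sin t = \<bar>s\<bar>" "0 \<le> t" "t \<le> pi"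
    using c_bounds arccos_bounded[of c] by (simp_all add: t_def sin_arccos)
  define w where "w = (if s \<ge> 0 then cross3 u v else - cross3 u v)"
  have frame': "orthonormal_frame u v w"
    using frame by (auto simp: w_def orthonormal_frame_def)
  have "R *v v = cos t *\<^sub>R v + sin t *\<^sub>R w" "R *v w = cos t *\<^sub>R w - sin t *\<^sub>R v"
    using Rv Rw matrix_vector_mult_scaleR[of R "-1" "cross3 u v"] by (auto simp: t w_def)
  from matrix_eq_axis_rotation[OF frame' Ru this] show ?thesis by (rule that[OF frame' t(3,4)])
qed

lemma near_identity_orthogonal_matrix_axis_rotation:
  fixes R :: "real^3^3"
  assumes orth: "orthogonal_matrix R" and "R \<noteq> mat 1" and "\<delta> < 2"
    and near: "\<And>x. norm (R *v x - x) \<le> \<delta> * norm x"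
  obtains u v w t where "orthonormal_frame u v w" "0 < t" "t \<le> pi" "2 - 2 * cos t \<le> \<delta>\<^sup>2"
    "\<And>x. R *v x = axis_rotation u v w t x"
proof -
  have "det R = 1"
  proof (rule ccontr)
    assume "det R \<noteq> 1"
    then have "det R = -1" using det_orthogonal_matrix[OF orth] by auto
    obtain x where "x \<noteq> 0" "R *v x = det R *\<^sub>R x" by (rule orthogonal_matrix_eigenvector_det[OF orth])
    then have "R *v x - x = (det R - 1) *\<^sub>R x" by (simp add: scaleR_left_diff_distrib)
    then have "2 * norm x \<le> \<delta> * norm x" using near[of x] \<open>det R = -1\<close> by simp
    with \<open>x \<noteq> 0\<close> \<open>\<delta> < 2\<close> show False by simp
  qed
  then obtain u v w t where frame: "orthonormal_frame u v w" and t: "0 \<le> t" "t \<le> pi"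
    and R: "\<And>x. R *v x = axis_rotation u v w t x"
    using orth rotation_matrix_axis_rotation unfolding rotation_matrix_def by blast
  have "t \<noteq> 0"
  proof
    assume "t = 0"
    then have "R *v x = mat 1 *v x" for x by (simp add: R axis_rotation_zero[OF frame])
    with \<open>R \<noteq> mat 1\<close> show False by (simp add: matrix_eq)
  qed
  note uvw = orthonormal_frame_inner[OF frame]
  have "R *v v - v = (cos t - 1) *\<^sub>R v + sin t *\<^sub>R w"
    using uvw by (simp add: R axis_rotation_def algebra_simps)
  then have "(norm (R *v v - v))\<^sup>2 = (cos t - 1)\<^sup>2 + (sin t)\<^sup>2"
    by (simp add: orthonormal_frame_norm_plane[OF frame])
  also have "\<dots> = 2 - 2 * cos t"
    using sin_cos_squared_add[of t] by (simp add: power2_eq_square algebra_simps)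
  finally have "(norm (R *v v - v))\<^sup>2 = 2 - 2 * cos t" .
  moreover have "norm v = 1" using uvw by (simp add: norm_eq_1)
  then have "norm (R *v v - v) \<le> \<delta>" using near[of v] by simp
  then have "(norm (R *v v - v))\<^sup>2 \<le> \<delta>\<^sup>2" by (simp add: power_mono)
  ultimately have "2 - 2 * cos t \<le> \<delta>\<^sup>2" by simp
  moreover have "0 < t" using \<open>t \<noteq> 0\<close> t(1) by simp
  ultimately show ?thesis using that[OF frame _ t(2) _ R] by blast
qed

section \<open>Rotation invariance from infinitely many symmetries\<close>

text \<open>Multiples of angles tending to zero approximate every nonnegative angle.\<close>

lemma closed_invariant_limit_axis_rotations:
  assumes "closed S"
    and lim: "u \<longlonglongrightarrow> u0" "v \<longlonglongrightarrow> v0" "w \<longlonglongrightarrow> w0" "t \<longlonglongrightarrow> 0" and t_pos: "\<And>n. t n > 0"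
    and inv: "\<And>n k x. x \<in> S \<Longrightarrow> axis_rotation (u n) (v n) (w n) (real k * t n) x \<in> S"
    and "0 \<le> \<phi>" "x \<in> S"
  shows "axis_rotation u0 v0 w0 \<phi> x \<in> S"
proof -
  define k where "k n = nat \<lfloor>\<phi> / t n\<rfloor>" for n
  have k_bounds: "\<phi> - t n \<le> real (k n) * t n" "real (k n) * t n \<le> \<phi>" for n
  proof -
    have k: "real (k n) = of_int \<lfloor>\<phi> / t n\<rfloor>" using \<open>0 \<le> \<phi>\<close> t_pos[of n] by (simp add: k_def)
    have "of_int \<lfloor>\<phi> / t n\<rfloor> \<le> \<phi> / t n" "\<phi> / t n < of_int \<lfloor>\<phi> / t n\<rfloor> + 1" by linarith+
    then have "of_int \<lfloor>\<phi> / t n\<rfloor> * t n \<le> \<phi>" "\<phi> < (of_int \<lfloor>\<phi> / t n\<rfloor> + 1) * t n"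
      using t_pos[of n] pos_le_divide_eq pos_divide_less_eq by blast+
    then show "\<phi> - t n \<le> real (k n) * t n" "real (k n) * t n \<le> \<phi>"
      by (simp_all add: k algebra_simps)
  qed
  have "(\<lambda>n. real (k n) * t n) \<longlonglongrightarrow> \<phi>"
  proof (rule tendsto_sandwich[OF _ _ _ tendsto_const])
    show "(\<lambda>n. \<phi> - t n) \<longlonglongrightarrow> \<phi>" using tendsto_diff[OF tendsto_const lim(4), of \<phi>] by simp
  qed (use k_bounds in auto)
  then have "(\<lambda>n. axis_rotation (u n) (v n) (w n) (real (k n) * t n) x) \<longlonglongrightarrow> axis_rotation u0 v0 w0 \<phi> x"
    using lim by (intro tendsto_axis_rotation)
  then show ?thesis by (rule closed_sequentially[OF \<open>closed S\<close> inv[OF \<open>x \<in> S\<close>]])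
qed

lemma matrix_funpow_image_subset:
  fixes R :: "'a::semiring_1^'n^'n"
  assumes "(*v) R ` S = S" "x \<in> S"
  shows "((*v) R ^^ k) x \<in> S"
  using assms by (induction k) auto

lemma cos_tendsto_one_imp_tendsto_zero:
  assumes "(\<lambda>n. cos (t n)) \<longlonglongrightarrow> 1" "\<And>n. 0 \<le> t n" "\<And>n. t n \<le> pi"
  shows "t \<longlonglongrightarrow> 0"
proof -
  have "(\<lambda>n. arccos (cos (t n))) \<longlonglongrightarrow> arccos 1"
    by (rule continuous_on_tendsto_compose[OF continuous_on_arccos' assms(1)]) auto
  moreover have "arccos (cos (t n)) = t n" for n using assms(2,3) by (simp add: arccos_cos)
  ultimately show ?thesis by simp
qed

lemma infinite_orthogonal_symmetries_small_rotations:
  fixes S :: "(real^3) set"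
  assumes "infinite G" and G: "\<And>A. A \<in> G \<Longrightarrow> orthogonal_matrix A \<and> (*v) A ` S = S"
  obtains u v w t where "\<And>n. orthonormal_frame (u n) (v n) (w n)" "\<And>n. t n > 0" "t \<longlonglongrightarrow> 0"
    "\<And>n k x. x \<in> S \<Longrightarrow> axis_rotation (u n) (v n) (w n) (real k * t n) x \<in> S"
proof -
  define \<delta> where "\<delta> n = inverse (real (Suc n))" for n
  have \<delta>: "\<delta> n > 0" "\<delta> n < 2" for n by (auto simp: \<delta>_def field_simps)
  have "\<exists>u v w t. orthonormal_frame u v w \<and> 0 < t \<and> t \<le> pi \<and> 2 - 2 * cos t \<le> (\<delta> n)\<^sup>2
      \<and> (\<forall>k x. x \<in> S \<longrightarrow> axis_rotation u v w (real k * t) x \<in> S)" for n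
  proof -
    obtain R where R: "orthogonal_matrix R" "(*v) R ` S = S" "R \<noteq> mat 1"
      "\<And>x. norm (R *v x - x) \<le> \<delta> n * norm x"
      using infinite_orthogonal_symmetries_near_identity[OF assms \<delta>(1)] by blast
    obtain u v w t where "orthonormal_frame u v w" "0 < t" "t \<le> pi" "2 - 2 * cos t \<le> (\<delta> n)\<^sup>2"
      and R_rot: "\<And>x. R *v x = axis_rotation u v w t x"
      using near_identity_orthogonal_matrix_axis_rotation[OF R(1,3) \<delta>(2) R(4)] by blast
    moreover have "(*v) R = axis_rotation u v w t" using R_rot by (simp add: fun_eq_iff)
    then have "axis_rotation u v w (real k * t) x \<in> S" if "x \<in> S" for k x
      using matrix_funpow_image_subset[OF R(2) that, of k]
      by (simp add: axis_rotation_funpow[OF \<open>orthonormal_frame u v w\<close>])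
    ultimately show ?thesis by blast
  qed
  then obtain u v w t where frames: "\<And>n. orthonormal_frame (u n) (v n) (w n)"
    and t: "\<And>n. 0 < t n" "\<And>n. t n \<le> pi" "\<And>n. 2 - 2 * cos (t n) \<le> (\<delta> n)\<^sup>2"
    and inv: "\<And>n k x. x \<in> S \<Longrightarrow> axis_rotation (u n) (v n) (w n) (real k * t n) x \<in> S"
    by metis
  have "(\<lambda>n. cos (t n)) \<longlonglongrightarrow> 1"
  proof (rule tendsto_sandwich[OF _ _ _ tendsto_const])
    have "(\<lambda>n. 1 - (\<delta> n)\<^sup>2 / 2) \<longlonglongrightarrow> 1 - 0\<^sup>2 / 2"
      unfolding \<delta>_def by (intro tendsto_intros LIMSEQ_inverse_real_of_nat) simp
    then show "(\<lambda>n. 1 - (\<delta> n)\<^sup>2 / 2) \<longlonglongrightarrow> 1" by simp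
    show "\<forall>\<^sub>F n in sequentially. 1 - (\<delta> n)\<^sup>2 / 2 \<le> cos (t n)"
    proof (intro always_eventually allI)
      show "1 - (\<delta> n)\<^sup>2 / 2 \<le> cos (t n)" for n using t(3)[of n] by linarith
    qed
  qed simp
  then have "t \<longlonglongrightarrow> 0"
    by (rule cos_tendsto_one_imp_tendsto_zero) (simp_all add: t(2) less_imp_le[OF t(1)])
  with that frames t(1) inv show ?thesis by blast
qed

lemma infinite_orthogonal_symmetries_rotation_invariant:
  fixes S :: "(real^3) set"
  assumes "closed S" "infinite G" and "\<And>A. A \<in> G \<Longrightarrow> orthogonal_matrix A \<and> (*v) A ` S = S"
  obtains u v w where "orthonormal_frame u v w" "\<And>\<phi> x. x \<in> S \<Longrightarrow> axis_rotation u v w \<phi> x \<in> S"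
proof -
  obtain u v w t where frames: "\<And>n. orthonormal_frame (u n) (v n) (w n)"
    and t: "\<And>n. t n > 0" "t \<longlonglongrightarrow> 0"
    and inv: "\<And>n k x. x \<in> S \<Longrightarrow> axis_rotation (u n) (v n) (w n) (real k * t n) x \<in> S"
    using infinite_orthogonal_symmetries_small_rotations[OF assms(2,3)] by metis
  obtain F r where "F \<in> {(u, v, w). orthonormal_frame u v w}" "strict_mono r"
    and lim: "((\<lambda>n. (u n, v n, w n)) \<circ> r) \<longlonglongrightarrow> F"
    using compact_orthonormal_frames[unfolded compact_eq_seq_compact_metric]
    by (rule seq_compactE) (use frames in auto)
  obtain u0 v0 w0 where F: "F = (u0, v0, w0)" by (metis prod_cases3)
  have frame0: "orthonormal_frame u0 v0 w0"
    using \<open>F \<in> _\<close> by (simp add: F)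
  have lims: "(u \<circ> r) \<longlonglongrightarrow> u0" "(v \<circ> r) \<longlonglongrightarrow> v0" "(w \<circ> r) \<longlonglongrightarrow> w0"
    using tendsto_fst[OF lim] tendsto_fst[OF tendsto_snd[OF lim]] tendsto_snd[OF tendsto_snd[OF lim]]
    by (simp_all add: F comp_def)
  have "(t \<circ> r) \<longlonglongrightarrow> 0" using LIMSEQ_subseq_LIMSEQ[OF t(2) \<open>strict_mono r\<close>] .
  have "axis_rotation u0 v0 w0 \<phi> x \<in> S" if "x \<in> S" for \<phi> x
  proof -
    obtain k :: nat where "- \<phi> / (2 * pi) \<le> real k" by (meson real_arch_simple)
    then have "0 \<le> \<phi> + 2 * pi * of_int (int k)" by (simp add: field_simps)
    then have "axis_rotation u0 v0 w0 (\<phi> + 2 * pi * of_int (int k)) x \<in> S"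
      using closed_invariant_limit_axis_rotations[OF \<open>closed S\<close> lims \<open>(t \<circ> r) \<longlonglongrightarrow> 0\<close>] t(1) inv that
      by (simp add: comp_def)
    then show ?thesis by (simp only: axis_rotation_periodic)
  qed
  with frame0 show ?thesis by (rule that)
qed

section \<open>The Chebyshev centre\<close>

definition circumradius :: "'a::metric_space set \<Rightarrow> 'a \<Rightarrow> real" where
  "circumradius C q = (SUP x\<in>C. dist x q)"

lemma dist_le_circumradius:
  assumes "bounded C" "x \<in> C"
  shows "dist x q \<le> circumradius C q"
proof -
  obtain \<epsilon> where "\<forall>y\<in>C. dist q y \<le> \<epsilon>" using assms(1) bounded_any_center by blast
  then have "bdd_above ((\<lambda>x. dist x q) ` C)" by (auto simp: bdd_above_def dist_commute)
  then show ?thesis unfolding circumradius_def using assms(2) by (rule cSUP_upper2) simp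
qed

lemma circumradius_le:
  assumes "C \<noteq> {}" "\<And>x. x \<in> C \<Longrightarrow> dist x q \<le> \<rho>"
  shows "circumradius C q \<le> \<rho>"
  unfolding circumradius_def using assms by (rule cSUP_least)

lemma continuous_on_circumradius:
  assumes "bounded C" "C \<noteq> {}"
  shows "continuous_on UNIV (circumradius C)"
proof -
  have triangle: "circumradius C q \<le> circumradius C q' + dist q q'" for q q'
  proof (rule circumradius_le[OF assms(2)])
    fix x assume "x \<in> C"
    then show "dist x q \<le> circumradius C q' + dist q q'"
      using dist_le_circumradius[OF assms(1), of x q'] dist_triangle[of x q q'] dist_commute[of q q']
      by linarith
  qed
  have "1-lipschitz_on UNIV (circumradius C)"
  proof (rule lipschitz_onI)
    fix q q'
    show "dist (circumradius C q) (circumradius C q') \<le> 1 * dist q q'"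
      using triangle[of q q'] triangle[of q' q] by (simp add: dist_real_def dist_commute abs_le_iff)
  qed simp
  then show ?thesis by (rule lipschitz_on_continuous_on)
qed

lemma circumradius_isometry_image:
  assumes "isometry T" "T ` C = C"
  shows "circumradius C (T q) = circumradius C q"
proof -
  have "circumradius C (T q) = (SUP x\<in>T ` C. dist x (T q))"
    unfolding circumradius_def using assms(2) by simp
  also have "\<dots> = circumradius C q"
    using assms(1) by (simp add: circumradius_def image_image isometry_def)
  finally show ?thesis .
qed

lemma dist_midpoint_squared:
  fixes x a b :: "'a::real_inner"
  shows "(dist x (midpoint a b))\<^sup>2 = ((dist x a)\<^sup>2 + (dist x b)\<^sup>2) / 2 - (dist a b)\<^sup>2 / 4"
  by (simp add: midpoint_def dist_norm power2_norm_eq_inner inner_diff_left inner_diff_right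
      inner_add_left inner_add_right inner_commute algebra_simps divide_simps)

lemma circumradius_midpoint_less:
  fixes C :: "'a::real_inner set"
  assumes "bounded C" "C \<noteq> {}" "a \<noteq> b" and same: "circumradius C a = circumradius C b"
  shows "circumradius C (midpoint a b) < circumradius C a"
proof -
  define r where "r = circumradius C a"
  have "(dist x (midpoint a b))\<^sup>2 \<le> r\<^sup>2 - (dist a b)\<^sup>2 / 4" if "x \<in> C" for x
  proof -
    have "dist x a \<le> r" "dist x b \<le> r"
      using dist_le_circumradius[OF assms(1) that, of a] dist_le_circumradius[OF assms(1) that, of b]
        same by (simp_all add: r_def)
    then have "(dist x a)\<^sup>2 \<le> r\<^sup>2" "(dist x b)\<^sup>2 \<le> r\<^sup>2" by (simp_all add: power_mono)
    then show ?thesis unfolding dist_midpoint_squared by simp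
  qed
  then have "circumradius C (midpoint a b) \<le> sqrt (r\<^sup>2 - (dist a b)\<^sup>2 / 4)"
    by (intro circumradius_le[OF assms(2)] real_le_rsqrt)
  also have "\<dots> < sqrt (r\<^sup>2)" using \<open>a \<noteq> b\<close> by (intro real_sqrt_less_mono) simp
  also have "\<dots> = r"
  proof -
    obtain x where "x \<in> C" using assms(2) by blast
    then have "0 \<le> r"
      using dist_le_circumradius[OF assms(1), of x a] zero_le_dist[of x a] unfolding r_def by linarith
    then show ?thesis by simp
  qed
  finally show ?thesis by (simp add: r_def)
qed

lemma circumradius_attains_min:
  fixes C :: "'a::euclidean_space set"
  assumes "bounded C" "C \<noteq> {}"
  obtains q where "\<And>y. circumradius C q \<le> circumradius C y"
proof -
  obtain x0 where "x0 \<in> C" using assms(2) by blast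
  define r0 where "r0 = circumradius C x0"
  obtain q where q: "q \<in> cball x0 r0" "\<And>y. y \<in> cball x0 r0 \<Longrightarrow> circumradius C q \<le> circumradius C y"
    using continuous_attains_inf[OF compact_cball _ continuous_on_subset[OF continuous_on_circumradius[OF assms]]]
      dist_le_circumradius[OF assms(1) \<open>x0 \<in> C\<close>, of x0]
    by (metis centre_in_cball dist_self empty_iff r0_def subset_UNIV)
  show ?thesis
  proof (rule that)
    fix y
    show "circumradius C q \<le> circumradius C y"
    proof (cases "y \<in> cball x0 r0")
      case False
      then have "r0 \<le> circumradius C y"
        using dist_le_circumradius[OF assms(1) \<open>x0 \<in> C\<close>, of y] by simp
      then show ?thesis using q(2)[of x0] \<open>x0 \<in> C\<close> dist_le_circumradius[OF assms(1), of x0 x0]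
        by (simp add: r0_def)
    qed (rule q(2))
  qed
qed

text \<open>The minimiser of the circumradius (the Chebyshev centre) is unique by strict convexity,
  hence fixed by every isometry preserving the set.\<close>

lemma isometry_invariant_centre:
  fixes C :: "'a::euclidean_space set"
  assumes "bounded C" "C \<noteq> {}"
  obtains p where "\<And>T. isometry T \<Longrightarrow> T ` C = C \<Longrightarrow> T p = p"
proof -
  obtain q where q: "\<And>y. circumradius C q \<le> circumradius C y"
    using circumradius_attains_min[OF assms] by blast
  show ?thesis
  proof (rule that)
    fix T assume "isometry T" "T ` C = C"
    then have "circumradius C (T q) = circumradius C q" by (rule circumradius_isometry_image)
    then show "T q = q"
      using circumradius_midpoint_less[OF assms, of "T q" q] q[of "midpoint (T q) q"] by force
  qed
qed

section \<open>Symmetries of a simple closed curve\<close>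

lemma infinite_symmetries_orthogonal_matrices:
  fixes C :: "(real^'n) set"
  assumes "infinite (symmetries C)" and fixes_p: "\<And>T. isometry T \<Longrightarrow> T ` C = C \<Longrightarrow> T p = p"
  obtains G where "infinite G"
    "\<And>A. A \<in> G \<Longrightarrow> orthogonal_matrix A \<and> (*v) A ` ((\<lambda>x. x - p) ` C) = (\<lambda>x. x - p) ` C"
proof -
  define Q where "Q T x = T (x + p) - p" for T :: "real^'n \<Rightarrow> real^'n" and x
  have Q: "orthogonal_transformation (Q T)" "(*v) (matrix (Q T)) = Q T"
    "Q T ` ((\<lambda>x. x - p) ` C) = (\<lambda>x. x - p) ` C" if "T \<in> symmetries C" for T
  proof -
    have "isometry T" "T ` C = C" using that by (auto simp: symmetries_def)
    then show ot: "orthogonal_transformation (Q T)"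
      using fixes_p by (simp add: orthogonal_transformation_isometry Q_def isometry_def dist_norm)
    then show "(*v) (matrix (Q T)) = Q T"
      by (simp add: orthogonal_transformation_def matrix_works fun_eq_iff)
    have "Q T ` ((\<lambda>x. x - p) ` C) = (\<lambda>x. x - p) ` (T ` C)"
      by (simp add: Q_def image_image)
    then show "Q T ` ((\<lambda>x. x - p) ` C) = (\<lambda>x. x - p) ` C"
      unfolding \<open>T ` C = C\<close> .
  qed
  have "inj_on (\<lambda>T. matrix (Q T)) (symmetries C)"
  proof (rule inj_onI)
    fix T1 T2 assume "T1 \<in> symmetries C" "T2 \<in> symmetries C" "matrix (Q T1) = matrix (Q T2)"
    then have "Q T1 (y - p) = Q T2 (y - p)" for y by (metis Q(2))
    then show "T1 = T2" by (simp add: Q_def fun_eq_iff)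
  qed
  then have "infinite ((\<lambda>T. matrix (Q T)) ` symmetries C)"
    using assms(1) finite_imageD by blast
  then show ?thesis
  proof (rule that)
    fix A assume "A \<in> (\<lambda>T. matrix (Q T)) ` symmetries C"
    then obtain T where "T \<in> symmetries C" "A = matrix (Q T)" by blast
    then show "orthogonal_matrix A \<and> (*v) A ` ((\<lambda>x. x - p) ` C) = (\<lambda>x. x - p) ` C"
      using Q[of T] by (simp add: orthogonal_transformation_matrix)
  qed
qed

lemma rotation_invariant_embedded_closed_curve_is_circle:
  fixes c :: "real \<Rightarrow> real^3"
  assumes curve: "embedded_closed_curve l c" "l > 0" "continuous_on UNIV c"
    and frame: "orthonormal_frame u v w"
    and inv: "\<And>\<phi> x. x \<in> range c \<Longrightarrow> p + axis_rotation u v w \<phi> (x - p) \<in> range c"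
  shows "is_circle (range c)"
proof -
  obtain x where "x \<in> range c" and off_line: "x - p \<noteq> ((x - p) \<bullet> u) *\<^sub>R u"
    using embedded_closed_curve_not_on_line[OF curve] by blast
  have off_axis: "((x - p) \<bullet> v)\<^sup>2 + ((x - p) \<bullet> w)\<^sup>2 > 0"
    using off_line orthonormal_frame_expand[OF frame, of "x - p"]
    by (auto simp: sum_power2_gt_zero_iff)
  define g where "g \<phi> = p + axis_rotation u v w \<phi> (x - p)" for \<phi>
  have "range g = range c"
  proof (rule embedded_closed_curve_range_subset_eq[OF curve])
    show "embedded_closed_curve (2 * pi) g"
      unfolding g_def by (rule embedded_closed_curve_axis_orbit[OF frame off_axis])
    show "continuous_on UNIV g" unfolding g_def axis_rotation_def by (intro continuous_intros)
    show "range g \<subseteq> range c" using inv \<open>x \<in> range c\<close> by (auto simp: g_def)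
  qed simp
  then show ?thesis using is_circle_axis_orbit[OF frame off_axis, of p] by (simp add: g_def)
qed

theorem propositionA3:
  fixes c :: "real \<Rightarrow> real^3" and l :: real
  assumes "l > 0"
    and "embedded_closed_curve l c"
    and "smooth_curve c"
    and "regular_curve c"
    and "\<not> is_circle (range c)"
  shows "finite (symmetries (range c))"
proof (rule ccontr)
  assume "infinite (symmetries (range c))"
  have cont: "continuous_on UNIV c" using assms(3) by (rule smooth_curve_continuous)
  have "compact (range c)" by (rule compact_range_embedded_closed_curve[OF assms(2,1) cont])
  then obtain p where "\<And>T. isometry T \<Longrightarrow> T ` range c = range c \<Longrightarrow> T p = p"
    using isometry_invariant_centre compact_imp_bounded by blast
  then obtain G where "infinite G"
    "\<And>A. A \<in> G \<Longrightarrow> orthogonal_matrix A \<and> (*v) A ` ((\<lambda>x. x - p) ` range c) = (\<lambda>x. x - p) ` range c"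
    using infinite_symmetries_orthogonal_matrices \<open>infinite (symmetries (range c))\<close> by blast
  moreover have "closed ((\<lambda>x. x - p) ` range c)"
    using \<open>compact (range c)\<close> by (intro compact_imp_closed compact_translation_subtract)
  ultimately obtain u v w where frame: "orthonormal_frame u v w"
    and rotation_invariant:
      "\<And>\<phi> x. x \<in> (\<lambda>x. x - p) ` range c \<Longrightarrow> axis_rotation u v w \<phi> x \<in> (\<lambda>x. x - p) ` range c"
    using infinite_orthogonal_symmetries_rotation_invariant by blast
  have "p + axis_rotation u v w \<phi> (x - p) \<in> range c" if "x \<in> range c" for \<phi> x
    using rotation_invariant[of "x - p" \<phi>] that by force
  then have "is_circle (range c)"
    by (rule rotation_invariant_embedded_closed_curve_is_circle[OF assms(2,1) cont frame])
  with assms(5) show False ..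
qed

end
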